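(* Let $X,Z$ be complex Banach spaces, $E\in L(X,Z)$, $A\colon\mathrm{dom}(A)\subseteq X\to Z$ closed and densely defined, and assume $(E,A)$ has a complex resolvent index $p_{\mathrm{res}}^{(E,A)}$; set $p:=p_{\mathrm{res}}^{(E,A)}+1$. Fix $\mu\in\rho(E,A)$, let $X_{\ker}:=\ker R_r(\mu)^p$, $Z_{\ker}:=\ker R_l(\mu)^p$, let $A_{\ker}:=A|_{\mathrm{dom}(A)\cap X_{\ker}}\colon \mathrm{dom}(A)\cap X_{\ker}\to Z_{\ker}$ (which has a bounded inverse $A_{\ker}^{-1}\colon Z_{\ker}\to X_{\ker}$) and $E_{\ker}:=E|_{X_{\ker}}\in L(X_{\ker},Z_{\ker})$. Let $f\in C^p([0,\infty);Z_{\ker})$. Then the equation $\frac{\mathrm d}{\mathrm dt}Ex(t)=Ax(t)+f(t)$, $t\in[0,\infty)$, has a classical solution given by $$x(t)=-\sum_{i=0}^pA_{\ker}^{-1}(E_{\ker}A_{\ker}^{-1})^if^{(i)}(t),\quad t\ge0.$$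
   Context: $\rho(E,A)$ is the set of $\lambda\in\mathbb C$ for which $\lambda E-A\colon\mathrm{dom}(A)\to Z$ is bijective with bounded inverse. $(E,A)$ has a complex resolvent index if there is a smallest $p_{\mathrm{res}}^{(E,A)}\in\mathbb N_0$ for which there exist $\omega\in\mathbb R$, $C>0$ with $\{\operatorname{Re}\lambda>\omega\}\subseteq\rho(E,A)$ and $\|(\lambda E-A)^{-1}\|\le C|\lambda|^{p_{\mathrm{res}}^{(E,A)}-1}$ for $\operatorname{Re}\lambda>\omega$. $R_r(\lambda):=(\lambda E-A)^{-1}E$, $R_l(\lambda):=E(\lambda E-A)^{-1}$. A classical solution of $\frac{\mathrm d}{\mathrm dt}Ex=Ax+f$ on $[0,\infty)$ is a function $x\in C([0,\infty);X)$ with $Ex\in C^1([0,\infty);Z)$, $x(t)\in\mathrm{dom}(A)$ for all $t\ge0$, satisfying the equation for all $t\ge0$. *)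

theory Defs
  imports "HOL-Analysis.Analysis"
begin

class complex_vector = real_vector +
  fixes scaleC :: "complex \<Rightarrow> 'a \<Rightarrow> 'a" (infixr "*\<^sub>C" 75)
  assumes scaleC_add_right: "a *\<^sub>C (x + y) = a *\<^sub>C x + a *\<^sub>C y"
    and scaleC_add_left: "(a + b) *\<^sub>C x = a *\<^sub>C x + b *\<^sub>C x"
    and scaleC_scaleC: "a *\<^sub>C (b *\<^sub>C x) = (a * b) *\<^sub>C x"
    and scaleC_one: "1 *\<^sub>C x = x"
    and scaleR_scaleC: "scaleR r x = (complex_of_real r) *\<^sub>C x"

class complex_normed_vector = complex_vector + real_normed_vector +
  assumes norm_scaleC: "norm (a *\<^sub>C x) = cmod a * norm x"

class complex_banach = complex_normed_vector + banach

definition cbounded_linear :: "('a::complex_normed_vector \<Rightarrow> 'b::complex_normed_vector) \<Rightarrow> bool" where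
  "cbounded_linear T \<longleftrightarrow> bounded_linear T \<and> (\<forall>c x. T (c *\<^sub>C x) = c *\<^sub>C T x)"

definition csubspace :: "'a::complex_vector set \<Rightarrow> bool" where
  "csubspace D \<longleftrightarrow> 0 \<in> D \<and> (\<forall>x\<in>D. \<forall>y\<in>D. x + y \<in> D) \<and> (\<forall>c. \<forall>x\<in>D. c *\<^sub>C x \<in> D)"

text \<open>A linear operator A with domain D (only the values on D matter).\<close>
definition clinear_on :: "'a::complex_vector set \<Rightarrow> ('a \<Rightarrow> 'b::complex_vector) \<Rightarrow> bool" where
  "clinear_on D A \<longleftrightarrow> csubspace D \<and> (\<forall>x\<in>D. \<forall>y\<in>D. A (x + y) = A x + A y)
      \<and> (\<forall>c. \<forall>x\<in>D. A (c *\<^sub>C x) = c *\<^sub>C A x)"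

definition closed_operator :: "'a::complex_normed_vector set \<Rightarrow> ('a \<Rightarrow> 'b::complex_normed_vector) \<Rightarrow> bool" where
  "closed_operator D A \<longleftrightarrow> clinear_on D A \<and> closed {(x, A x) | x. x \<in> D}"

definition densely_defined :: "'a::complex_normed_vector set \<Rightarrow> bool" where
  "densely_defined D \<longleftrightarrow> closure D = UNIV"

definition pencil :: "('x::complex_normed_vector \<Rightarrow> 'z::complex_normed_vector) \<Rightarrow> ('x \<Rightarrow> 'z) \<Rightarrow> complex \<Rightarrow> 'x \<Rightarrow> 'z" where
  "pencil E A l = (\<lambda>x. l *\<^sub>C E x - A x)"

definition resolvent :: "('x::complex_normed_vector \<Rightarrow> 'z::complex_normed_vector) \<Rightarrow> ('x \<Rightarrow> 'z) \<Rightarrow> 'x set \<Rightarrow> complex \<Rightarrow> 'z \<Rightarrow> 'x" where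
  "resolvent E A D l = the_inv_into D (pencil E A l)"

definition resolvent_set :: "('x::complex_normed_vector \<Rightarrow> 'z::complex_normed_vector) \<Rightarrow> ('x \<Rightarrow> 'z) \<Rightarrow> 'x set \<Rightarrow> complex set" where
  "resolvent_set E A D = {l. bij_betw (pencil E A l) D UNIV \<and> bounded_linear (resolvent E A D l)}"

text \<open>Resolvent growth bound with exponent p - 1 (p :: nat); for p = 0 and \<lambda> = 0 the
  bound |\<lambda>|^{-1} is +\<infinity>, i.e. no constraint.\<close>
definition resolvent_bound :: "('x::complex_normed_vector \<Rightarrow> 'z::complex_normed_vector) \<Rightarrow> ('x \<Rightarrow> 'z) \<Rightarrow> 'x set \<Rightarrow> nat \<Rightarrow> bool" where
  "resolvent_bound E A D p \<longleftrightarrow> (\<exists>\<omega>::real. \<exists>C::real. C > 0 \<and> {l. Re l > \<omega>} \<subseteq> resolvent_set E A D \<and>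
     (\<forall>l. Re l > \<omega> \<longrightarrow> (p = 0 \<and> l = 0) \<or>
          onorm (resolvent E A D l) \<le> C * cmod l powi (int p - 1)))"

definition has_resolvent_index :: "('x::complex_normed_vector \<Rightarrow> 'z::complex_normed_vector) \<Rightarrow> ('x \<Rightarrow> 'z) \<Rightarrow> 'x set \<Rightarrow> bool" where
  "has_resolvent_index E A D \<longleftrightarrow> (\<exists>p. resolvent_bound E A D p)"

definition resolvent_index :: "('x::complex_normed_vector \<Rightarrow> 'z::complex_normed_vector) \<Rightarrow> ('x \<Rightarrow> 'z) \<Rightarrow> 'x set \<Rightarrow> nat" where
  "resolvent_index E A D = (LEAST p. resolvent_bound E A D p)"

definition R_r :: "('x::complex_normed_vector \<Rightarrow> 'z::complex_normed_vector) \<Rightarrow> ('x \<Rightarrow> 'z) \<Rightarrow> 'x set \<Rightarrow> complex \<Rightarrow> 'x \<Rightarrow> 'x" where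
  "R_r E A D l = resolvent E A D l \<circ> E"

definition R_l :: "('x::complex_normed_vector \<Rightarrow> 'z::complex_normed_vector) \<Rightarrow> ('x \<Rightarrow> 'z) \<Rightarrow> 'x set \<Rightarrow> complex \<Rightarrow> 'z \<Rightarrow> 'z" where
  "R_l E A D l = E \<circ> resolvent E A D l"

definition classical_solution :: "('x::complex_normed_vector \<Rightarrow> 'z::complex_normed_vector) \<Rightarrow> ('x \<Rightarrow> 'z) \<Rightarrow> 'x set \<Rightarrow> (real \<Rightarrow> 'z) \<Rightarrow> (real \<Rightarrow> 'x) \<Rightarrow> bool" where
  "classical_solution E A D f x \<longleftrightarrow>
     continuous_on {0..} x \<and>
     (\<exists>g. continuous_on {0..} g \<and>
          (\<forall>t\<ge>0. ((\<lambda>s. E (x s)) has_vector_derivative g t) (at t within {0..})) \<and>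
          (\<forall>t\<ge>0. x t \<in> D \<and> g t = A (x t) + f t))"

end

theory Submission
  imports Defs
begin

(*
  On the kernel spaces the problem is purely algebraic. On dom(A) we have
  A = -(I - \<mu> R_l(\<mu>))(\<mu>E - A), and R_l(\<mu>)^p vanishes on Z_ker, so the inverse of
  A_ker is the truncated Neumann series -(\<mu>E - A)^-1 \<Sum>_{k<p} \<mu>^k R_l(\<mu>)^k, and
  N := E A_ker^-1 = -R_l(\<mu>) \<Sum>_{k<p} \<mu>^k R_l(\<mu>)^k is nilpotent of order p on Z_ker.
  For nilpotent N the sum x = -\<Sum>_i A_ker^-1 N^i f^(i) telescopes: Ex = -\<Sum>_{i<p} N^(i+1) f^(i)
  has derivative -\<Sum>_{i<p} N^(i+1) f^(i+1) = Ax + f.  The derivatives f^(i) stay in Z_ker,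
  the kernel of a bounded operator.
*)

lemma bounded_linear_scaleC_right: "bounded_linear (\<lambda>x::'a::complex_normed_vector. c *\<^sub>C x)"
proof (rule bounded_linear_intro[where K="cmod c"])
  fix x y :: 'a
  show "c *\<^sub>C (x + y) = c *\<^sub>C x + c *\<^sub>C y" by (rule scaleC_add_right)
next
  fix r and x :: 'a
  show "c *\<^sub>C (r *\<^sub>R x) = r *\<^sub>R (c *\<^sub>C x)"
    by (simp add: scaleR_scaleC scaleC_scaleC mult.commute)
next
  fix x :: 'a
  show "norm (c *\<^sub>C x) \<le> norm x * cmod c" by (simp add: norm_scaleC)
qed

lemma scaleC_minus1_left: "(-1) *\<^sub>C (x::'a::complex_vector) = - x"
  by (metis of_real_1 of_real_minus scaleR_minus1_left scaleR_scaleC)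

lemma scaleC_zero_right [simp]: "c *\<^sub>C (0::'a::complex_normed_vector) = 0"
  using linear_0[OF bounded_linear.linear[OF bounded_linear_scaleC_right]] .

lemma scaleC_diff_right: "c *\<^sub>C (x - y) = c *\<^sub>C x - c *\<^sub>C (y::'a::complex_normed_vector)"
  using linear_diff[OF bounded_linear.linear[OF bounded_linear_scaleC_right]] .

lemma cbounded_linear_imp_bounded_linear: "cbounded_linear f \<Longrightarrow> bounded_linear f"
  by (simp add: cbounded_linear_def)

lemma cbounded_linear_scaleC: "cbounded_linear f \<Longrightarrow> f (c *\<^sub>C x) = c *\<^sub>C f x"
  by (simp add: cbounded_linear_def)

lemma cbounded_linear_compose:
  "cbounded_linear f \<Longrightarrow> cbounded_linear g \<Longrightarrow> cbounded_linear (\<lambda>x. f (g x))"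
  by (simp add: cbounded_linear_def bounded_linear_compose)

lemma cbounded_linear_funpow:
  fixes f :: "'a::complex_normed_vector \<Rightarrow> 'a"
  assumes "cbounded_linear f"
  shows "cbounded_linear (f ^^ n)"
proof (induction n)
  case 0
  show ?case by (simp add: cbounded_linear_def bounded_linear_ident id_def)
next
  case (Suc n)
  then show ?case using cbounded_linear_compose[OF assms] by (simp add: o_def)
qed

lemma clinear_on_zero:
  assumes "clinear_on D A"
  shows "0 \<in> D" and "A 0 = 0"
proof -
  show "0 \<in> D" using assms by (simp add: clinear_on_def csubspace_def)
  then have "A (0 + 0) = A 0 + A 0" using assms unfolding clinear_on_def by blast
  then show "A 0 = 0" by simp
qed

lemma clinear_on_add:
  assumes "clinear_on D A" "x \<in> D" "y \<in> D"
  shows "x + y \<in> D" and "A (x + y) = A x + A y"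
  using assms by (auto simp: clinear_on_def csubspace_def)

lemma clinear_on_scaleC:
  assumes "clinear_on D A" "x \<in> D"
  shows "c *\<^sub>C x \<in> D" and "A (c *\<^sub>C x) = c *\<^sub>C A x"
  using assms by (auto simp: clinear_on_def csubspace_def)

lemma clinear_on_uminus:
  assumes "clinear_on D A" "x \<in> D"
  shows "- x \<in> D" and "A (- x) = - A x"
  using clinear_on_scaleC[OF assms, of "-1"] by (simp_all add: scaleC_minus1_left)

lemma clinear_on_diff:
  assumes "clinear_on D A" "x \<in> D" "y \<in> D"
  shows "x - y \<in> D" and "A (x - y) = A x - A y"
  using clinear_on_add[OF assms(1,2) clinear_on_uminus(1)[OF assms(1,3)]]
    clinear_on_uminus(2)[OF assms(1,3)]
  by simp_all

lemma clinear_on_sum: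
  assumes "clinear_on D A" "finite I" "\<forall>i\<in>I. v i \<in> D"
  shows "sum v I \<in> D \<and> A (sum v I) = (\<Sum>i\<in>I. A (v i))"
  using assms(2,3)
proof (induction I rule: finite_induct)
  case empty
  then show ?case using clinear_on_zero[OF assms(1)] by simp
next
  case (insert i I)
  then show ?case using clinear_on_add[OF assms(1), of "v i" "sum v I"] by simp
qed

lemma bounded_linear_funpow:
  fixes f :: "'a::real_normed_vector \<Rightarrow> 'a"
  assumes "bounded_linear f"
  shows "bounded_linear (f ^^ n)"
proof (induction n)
  case 0
  show ?case by (simp add: bounded_linear_ident id_def)
next
  case (Suc n)
  then show ?case using bounded_linear_compose[OF assms] by (simp add: o_def)
qed

lemma funpow_commute: "(f ^^ m) ((f ^^ n) x) = (f ^^ n) ((f ^^ m) x)"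
  by (metis funpow_add add.commute comp_apply)

lemma at_within_atLeast_nontrivial: "a \<le> (t::real) \<Longrightarrow> at t within {a..} \<noteq> bot"
proof -
  assume "a \<le> t"
  then have "t islimpt {a..t+1}" by (simp add: islimpt_Icc)
  then have "t islimpt {a..}" by (rule islimpt_subset) auto
  then show ?thesis by (simp add: trivial_limit_within)
qed

lemma derivatives_in_kernel:
  assumes L: "bounded_linear L"
    and f0: "\<forall>t\<ge>0. L (f 0 t) = 0"
    and f_deriv: "\<forall>i<n. \<forall>t\<ge>0. (f i has_vector_derivative f (Suc i) t) (at t within {0..})"
  shows "i \<le> n \<Longrightarrow> t \<ge> 0 \<Longrightarrow> L (f i t) = 0"
proof (induction i arbitrary: t)
  case 0
  then show ?case using f0 by simp
next
  case (Suc i)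
  have "((\<lambda>s. L (f i s)) has_vector_derivative L (f (Suc i) t)) (at t within {0..})"
    using bounded_linear.has_vector_derivative[OF L] f_deriv Suc.prems by simp
  moreover have "((\<lambda>s. L (f i s)) has_vector_derivative 0) (at t within {0..})"
    by (rule has_vector_derivative_transform[where f="\<lambda>s. 0"]) (use Suc in auto)
  ultimately show ?case
    using vector_derivative_unique_within at_within_atLeast_nontrivial Suc.prems by blast
qed

lemma classical_solution_cong:
  assumes x: "classical_solution E A D f x" and eq: "\<And>t. t \<ge> 0 \<Longrightarrow> y t = x t"
  shows "classical_solution E A D f y"
proof -
  obtain g where "continuous_on {0..} g"
    and "\<forall>t\<ge>0. ((\<lambda>s. E (x s)) has_vector_derivative g t) (at t within {0..})"
    and "\<forall>t\<ge>0. x t \<in> D \<and> g t = A (x t) + f t"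
    using x by (auto simp: classical_solution_def)
  moreover have "continuous_on {0..} y"
    using x eq continuous_on_cong[of "{0..}" "{0..}" y x] by (simp add: classical_solution_def)
  ultimately show ?thesis
    unfolding classical_solution_def
    by (auto intro!: exI[of _ g] intro: has_vector_derivative_transform simp: eq)
qed

lemma classical_solution_nilpotent:
  fixes E :: "'x::complex_normed_vector \<Rightarrow> 'z::complex_normed_vector"
  assumes E: "bounded_linear E" and A: "clinear_on D A" and J: "bounded_linear J"
    and right_inverse: "\<And>z. z \<in> Z \<Longrightarrow> J z \<in> D \<and> A (J z) = z"
    and invariant: "\<And>z. z \<in> Z \<Longrightarrow> E (J z) \<in> Z"
    and nilpotent: "\<And>z. z \<in> Z \<Longrightarrow> ((E \<circ> J) ^^ p) z = 0"
    and f_Z: "\<And>i t. i \<le> p \<Longrightarrow> t \<ge> 0 \<Longrightarrow> f i t \<in> Z"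
    and f_deriv: "\<forall>i<p. \<forall>t\<ge>0. (f i has_vector_derivative f (Suc i) t) (at t within {0..})"
    and f_cont: "\<forall>i\<le>p. continuous_on {0..} (f i)"
  shows "classical_solution E A D (f 0) (\<lambda>t. - (\<Sum>i\<le>p. J (((E \<circ> J) ^^ i) (f i t))))"
proof -
  define N where "N = E \<circ> J"
  define x where "x t = - (\<Sum>i\<le>p. J ((N ^^ i) (f i t)))" for t
  define g where "g t = - (\<Sum>i<p. (N ^^ Suc i) (f (Suc i) t))" for t
  have N: "bounded_linear N" using bounded_linear_compose[OF E J] by (simp add: N_def o_def)
  have NZ: "z \<in> Z \<Longrightarrow> (N ^^ i) z \<in> Z" for i z
    by (induction i) (auto simp: N_def invariant)
  have Ex: "E (x t) = - (\<Sum>i<p. (N ^^ Suc i) (f i t))" if "t \<ge> 0" for t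
  proof -
    have "E (x t) = - (\<Sum>i\<le>p. (N ^^ Suc i) (f i t))"
      by (simp add: x_def N_def linear_neg[OF bounded_linear.linear[OF E]]
          linear_sum[OF bounded_linear.linear[OF E]])
    moreover have "(N ^^ Suc p) (f p t) = 0"
      using nilpotent[OF f_Z[OF le_refl that]] linear_0[OF bounded_linear.linear[OF N]]
      by (simp add: N_def)
    ultimately show ?thesis by (simp add: lessThan_Suc_atMost[symmetric])
  qed
  have Ax: "x t \<in> D \<and> A (x t) = - (\<Sum>i\<le>p. (N ^^ i) (f i t))" if "t \<ge> 0" for t
  proof -
    have "\<forall>i\<in>{..p}. J ((N ^^ i) (f i t)) \<in> D"
      using right_inverse NZ f_Z that by auto
    from clinear_on_sum[OF A finite_atMost this] show ?thesis
      using clinear_on_uminus[OF A] right_inverse NZ f_Z that by (simp add: x_def)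
  qed
  have "continuous_on {0..} x"
    unfolding x_def
    by (intro continuous_on_minus continuous_on_sum bounded_linear.continuous_on[OF J]
        bounded_linear.continuous_on[OF bounded_linear_funpow[OF N]]) (use f_cont in auto)
  moreover have "continuous_on {0..} g"
    unfolding g_def
    by (intro continuous_on_minus continuous_on_sum
        bounded_linear.continuous_on[OF bounded_linear_funpow[OF N]]) (use f_cont in auto)
  moreover have "((\<lambda>s. E (x s)) has_vector_derivative g t) (at t within {0..})" if "t \<ge> 0" for t
  proof (rule has_vector_derivative_transform[OF _ Ex])
    show "((\<lambda>s. - (\<Sum>i<p. (N ^^ Suc i) (f i s))) has_vector_derivative g t) (at t within {0..})"
      unfolding g_def
      by (intro has_vector_derivative_minus has_vector_derivative_sum
          bounded_linear.has_vector_derivative[OF bounded_linear_funpow[OF N]])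
        (use f_deriv that in auto)
  qed (use that in auto)
  moreover have "g t = A (x t) + f 0 t" if "t \<ge> 0" for t
    using Ax[OF that] by (simp add: g_def sum.atMost_shift)
  ultimately show ?thesis
    using Ax unfolding classical_solution_def N_def[symmetric] x_def[symmetric] by blast
qed

locale pencil_regular_at =
  fixes E :: "'x::complex_normed_vector \<Rightarrow> 'z::complex_normed_vector"
    and A :: "'x \<Rightarrow> 'z" and D :: "'x set" and \<mu> :: complex
  assumes E: "cbounded_linear E" and A: "clinear_on D A" and mu: "\<mu> \<in> resolvent_set E A D"
begin

abbreviation "R \<equiv> resolvent E A D \<mu>"
abbreviation "Rl \<equiv> R_l E A D \<mu>"
abbreviation "Rr \<equiv> R_r E A D \<mu>"
abbreviation "X_ker p \<equiv> {x. (Rr ^^ p) x = 0}"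
abbreviation "Z_ker p \<equiv> {z. (Rl ^^ p) z = 0}"

lemma resolvent_mem: "R z \<in> D"
  and pencil_resolvent: "\<mu> *\<^sub>C E (R z) - A (R z) = z"
  and resolvent_pencil: "x \<in> D \<Longrightarrow> R (\<mu> *\<^sub>C E x - A x) = x"
proof -
  have bij: "bij_betw (pencil E A \<mu>) D UNIV"
    using mu by (simp add: resolvent_set_def)
  then show "R z \<in> D"
    by (simp add: resolvent_def the_inv_into_into bij_betw_def)
  show "\<mu> *\<^sub>C E (R z) - A (R z) = z"
    using bij f_the_inv_into_f_bij_betw[OF bij] by (simp add: resolvent_def pencil_def)
  show "x \<in> D \<Longrightarrow> R (\<mu> *\<^sub>C E x - A x) = x"
    using bij the_inv_into_f_f[of "pencil E A \<mu>" D x]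
    by (simp add: resolvent_def pencil_def bij_betw_def)
qed

lemma A_resolvent: "A (R z) = \<mu> *\<^sub>C Rl z - z"
  using pencil_resolvent[of z] by (simp add: R_l_def algebra_simps)

lemma cbounded_linear_resolvent: "cbounded_linear R"
  unfolding cbounded_linear_def
proof (intro conjI allI)
  show "bounded_linear R" using mu by (simp add: resolvent_set_def)
  fix c z
  have "\<mu> *\<^sub>C E (c *\<^sub>C R z) - A (c *\<^sub>C R z) = c *\<^sub>C (\<mu> *\<^sub>C E (R z) - A (R z))"
    using clinear_on_scaleC[OF A resolvent_mem] cbounded_linear_scaleC[OF E]
    by (simp add: scaleC_diff_right scaleC_scaleC mult.commute)
  then have "R (c *\<^sub>C z) = R (\<mu> *\<^sub>C E (c *\<^sub>C R z) - A (c *\<^sub>C R z))"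
    by (simp add: pencil_resolvent)
  also have "\<dots> = c *\<^sub>C R z"
    by (rule resolvent_pencil[OF clinear_on_scaleC(1)[OF A resolvent_mem]])
  finally show "R (c *\<^sub>C z) = c *\<^sub>C R z" .
qed

lemma cbounded_linear_Rl_funpow: "cbounded_linear (Rl ^^ n)"
  using cbounded_linear_funpow[OF cbounded_linear_compose[OF E cbounded_linear_resolvent]]
  by (simp add: R_l_def o_def)

lemma cbounded_linear_Rr_funpow: "cbounded_linear (Rr ^^ n)"
  using cbounded_linear_funpow[OF cbounded_linear_compose[OF cbounded_linear_resolvent E]]
  by (simp add: R_r_def o_def)

lemma Rr_funpow_resolvent: "(Rr ^^ n) (R z) = R ((Rl ^^ n) z)"
  by (induction n) (simp_all add: R_r_def R_l_def)

lemma A_eq_0_imp_eq_Rr_funpow: "x \<in> D \<Longrightarrow> A x = 0 \<Longrightarrow> x = (\<mu> ^ n) *\<^sub>C (Rr ^^ n) x"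
proof (induction n)
  case 0
  then show ?case by (simp add: scaleC_one)
next
  case (Suc n)
  have "x = \<mu> *\<^sub>C Rr x"
    using resolvent_pencil[OF Suc.prems(1)] Suc.prems(2) cbounded_linear_resolvent
    by (simp add: R_r_def cbounded_linear_scaleC)
  then have "(Rr ^^ n) x = \<mu> *\<^sub>C (Rr ^^ n) (Rr x)"
    using cbounded_linear_scaleC[OF cbounded_linear_Rr_funpow] by metis
  also have "\<dots> = \<mu> *\<^sub>C (Rr ^^ Suc n) x"
    by (simp only: funpow_swap1 funpow.simps(2) comp_apply)
  finally have "x = (\<mu> ^ n) *\<^sub>C (\<mu> *\<^sub>C (Rr ^^ Suc n) x)"
    using Suc by simp
  then show ?case by (simp add: scaleC_scaleC mult.commute)
qed

lemma inj_on_A_X_ker: "inj_on A (D \<inter> X_ker p)"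
proof (rule inj_onI)
  fix x y assume x: "x \<in> D \<inter> X_ker p" and y: "y \<in> D \<inter> X_ker p" and "A x = A y"
  then have "A (x - y) = 0" and "x - y \<in> D"
    using clinear_on_diff[OF A] by auto
  moreover have "(Rr ^^ p) (x - y) = 0"
    using x y linear_diff[OF bounded_linear.linear[OF
        cbounded_linear_imp_bounded_linear[OF cbounded_linear_Rr_funpow]]]
    by simp
  ultimately have "x - y = 0" using A_eq_0_imp_eq_Rr_funpow[of "x - y" p] by simp
  then show "x = y" by simp
qed

text \<open>The inverse of A_ker as a truncated Neumann series, extended to a bounded operator
  on all of Z.\<close>
definition kernel_inverse :: "nat \<Rightarrow> 'z \<Rightarrow> 'x" where
  "kernel_inverse p z = - (\<Sum>k<p. (\<mu> ^ k) *\<^sub>C R ((Rl ^^ k) z))"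

lemma bounded_linear_kernel_inverse: "bounded_linear (kernel_inverse p)"
  unfolding kernel_inverse_def[abs_def]
  by (intro bounded_linear_minus bounded_linear_sum
      bounded_linear_compose[OF bounded_linear_scaleC_right]
      bounded_linear_compose[OF cbounded_linear_imp_bounded_linear[OF cbounded_linear_resolvent]]
      cbounded_linear_imp_bounded_linear[OF cbounded_linear_Rl_funpow])

lemma kernel_inverse_right_inverse:
  assumes z: "z \<in> Z_ker p"
  shows "kernel_inverse p z \<in> D" and "A (kernel_inverse p z) = z"
proof -
  have terms: "\<forall>k\<in>{..<p}. (\<mu> ^ k) *\<^sub>C R ((Rl ^^ k) z) \<in> D"
    using clinear_on_scaleC(1)[OF A resolvent_mem] by blast
  note sum = clinear_on_sum[OF A finite_lessThan terms]
  show "kernel_inverse p z \<in> D"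
    using clinear_on_uminus(1)[OF A] sum by (simp add: kernel_inverse_def)
  have step: "A ((\<mu> ^ k) *\<^sub>C R ((Rl ^^ k) z))
      = (\<mu> ^ Suc k) *\<^sub>C (Rl ^^ Suc k) z - (\<mu> ^ k) *\<^sub>C (Rl ^^ k) z" for k
    using clinear_on_scaleC(2)[OF A resolvent_mem]
    by (simp add: A_resolvent scaleC_diff_right scaleC_scaleC mult.commute)
  have "A (kernel_inverse p z) = - (\<Sum>k<p. A ((\<mu> ^ k) *\<^sub>C R ((Rl ^^ k) z)))"
    using clinear_on_uminus(2)[OF A] sum by (simp add: kernel_inverse_def)
  also have "\<dots> = - (\<Sum>k<p. (\<mu> ^ Suc k) *\<^sub>C (Rl ^^ Suc k) z - (\<mu> ^ k) *\<^sub>C (Rl ^^ k) z)"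
    by (simp only: step)
  also have "\<dots> = - ((\<mu> ^ p) *\<^sub>C (Rl ^^ p) z - (\<mu> ^ 0) *\<^sub>C (Rl ^^ 0) z)"
    using sum_lessThan_telescope[of "\<lambda>k. (\<mu> ^ k) *\<^sub>C (Rl ^^ k) z" p] by (simp only:)
  also have "\<dots> = z"
    using z by (simp add: scaleC_one)
  finally show "A (kernel_inverse p z) = z" .
qed

lemma kernel_inverse_mem_X_ker:
  assumes z: "z \<in> Z_ker p"
  shows "kernel_inverse p z \<in> X_ker p"
proof -
  have "(Rl ^^ p) ((Rl ^^ k) z) = 0" for k
    using z funpow_commute[where f=Rl and m=p and n=k]
      linear_0[OF bounded_linear.linear[OF cbounded_linear_imp_bounded_linear[OF
          cbounded_linear_Rl_funpow]]]
    by simp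
  then show ?thesis
    using cbounded_linear_Rr_funpow[of p] cbounded_linear_resolvent
    by (simp add: kernel_inverse_def cbounded_linear_def linear_neg linear_sum linear_0
        bounded_linear.linear Rr_funpow_resolvent)
qed

lemma the_inv_into_X_ker:
  "z \<in> Z_ker p \<Longrightarrow> the_inv_into (D \<inter> X_ker p) A z = kernel_inverse p z"
  using kernel_inverse_right_inverse kernel_inverse_mem_X_ker
  by (intro the_inv_into_f_eq[OF inj_on_A_X_ker]) auto

lemma E_kernel_inverse: "E (kernel_inverse p z) = - (\<Sum>k<p. (\<mu> ^ k) *\<^sub>C (Rl ^^ Suc k) z)"
  using E by (simp add: kernel_inverse_def cbounded_linear_def linear_neg linear_sum
      bounded_linear.linear R_l_def)

lemma Rl_funpow_E_kernel_inverse: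
  assumes z: "(Rl ^^ Suc m) z = 0"
  shows "(Rl ^^ m) (E (kernel_inverse p z)) = 0"
proof -
  have "(Rl ^^ m) ((Rl ^^ Suc k) z) = (Rl ^^ k) ((Rl ^^ Suc m) z)" for k
    by (metis add.commute add_Suc_right comp_apply funpow_add)
  then have "(Rl ^^ m) ((Rl ^^ Suc k) z) = 0" for k
    using z linear_0[OF bounded_linear.linear[OF cbounded_linear_imp_bounded_linear[OF
          cbounded_linear_Rl_funpow]]]
    by simp
  then show ?thesis
    using cbounded_linear_Rl_funpow[of m]
    by (simp add: E_kernel_inverse cbounded_linear_def linear_neg linear_sum bounded_linear.linear)
qed

lemma Rl_funpow_E_kernel_inverse_funpow:
  "(Rl ^^ (j + m)) z = 0 \<Longrightarrow> (Rl ^^ m) (((E \<circ> kernel_inverse p) ^^ j) z) = 0"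
proof (induction j arbitrary: m)
  case 0
  then show ?case by simp
next
  case (Suc j)
  have "(Rl ^^ Suc m) (((E \<circ> kernel_inverse p) ^^ j) z) = 0"
    using Suc.IH[of "Suc m"] Suc.prems by (simp add: o_def)
  from Rl_funpow_E_kernel_inverse[OF this] show ?case
    by (simp add: o_def)
qed

lemma E_kernel_inverse_funpow_mem_Z_ker:
  assumes "z \<in> Z_ker p"
  shows "((E \<circ> kernel_inverse p) ^^ j) z \<in> Z_ker p"
proof -
  have "(Rl ^^ (j + p)) z = 0"
    using assms linear_0[OF bounded_linear.linear[OF cbounded_linear_imp_bounded_linear[OF
          cbounded_linear_Rl_funpow]]]
    by (simp add: funpow_add)
  then show ?thesis by (simp add: Rl_funpow_E_kernel_inverse_funpow)
qed

lemma E_kernel_inverse_nilpotent: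
  "z \<in> Z_ker p \<Longrightarrow> ((E \<circ> kernel_inverse p) ^^ p) z = 0"
  using Rl_funpow_E_kernel_inverse_funpow[where j=p and m=0] by simp

lemma funpow_E_the_inv_into:
  assumes "z \<in> Z_ker p"
  shows "((E \<circ> the_inv_into (D \<inter> X_ker p) A) ^^ i) z = ((E \<circ> kernel_inverse p) ^^ i) z"
proof (induction i)
  case 0
  show ?case by simp
next
  case (Suc i)
  have "((E \<circ> kernel_inverse p) ^^ i) z \<in> Z_ker p"
    by (rule E_kernel_inverse_funpow_mem_Z_ker[OF assms])
  then show ?case
    using Suc.IH the_inv_into_X_ker by (simp add: o_def)
qed

lemma the_inv_into_funpow_E_the_inv_into:
  assumes "z \<in> Z_ker p"
  shows "the_inv_into (D \<inter> X_ker p) A (((E \<circ> the_inv_into (D \<inter> X_ker p) A) ^^ i) z)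
    = kernel_inverse p (((E \<circ> kernel_inverse p) ^^ i) z)"
  using the_inv_into_X_ker[OF E_kernel_inverse_funpow_mem_Z_ker[OF assms]]
  by (simp only: funpow_E_the_inv_into[OF assms])

end

theorem proposition3p3:
  fixes E :: "'x::complex_banach \<Rightarrow> 'z::complex_banach"
    and A :: "'x \<Rightarrow> 'z" and D :: "'x set"
    and \<mu> :: complex and p :: nat
    and f :: "nat \<Rightarrow> real \<Rightarrow> 'z"
  assumes E: "cbounded_linear E"
    and A: "closed_operator D A" and dense: "densely_defined D"
    and idx: "has_resolvent_index E A D"
    and p_def: "p = resolvent_index E A D + 1"
    and mu: "\<mu> \<in> resolvent_set E A D"
    and f_ker: "\<forall>t\<ge>0. f 0 t \<in> {z. (R_l E A D \<mu> ^^ p) z = 0}"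
    and f_deriv: "\<forall>i<p. \<forall>t\<ge>0. (f i has_vector_derivative f (Suc i) t) (at t within {0..})"
    and f_cont: "\<forall>i\<le>p. continuous_on {0..} (f i)"
  shows "classical_solution E A D (f 0)
           (\<lambda>t. - (\<Sum>i\<le>p. the_inv_into (D \<inter> {x. (R_r E A D \<mu> ^^ p) x = 0}) A
                    (((E \<circ> the_inv_into (D \<inter> {x. (R_r E A D \<mu> ^^ p) x = 0}) A) ^^ i) (f i t))))"
proof -
  have A_linear: "clinear_on D A"
    using A by (simp add: closed_operator_def)
  interpret pencil_regular_at E A D \<mu>
    using E A_linear mu by unfold_locales
  have f_Z_ker: "f i t \<in> Z_ker p" if "i \<le> p" "t \<ge> 0" for i t
    using derivatives_in_kernel[OF cbounded_linear_imp_bounded_linear[OF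
          cbounded_linear_Rl_funpow] _ f_deriv] f_ker that
    by simp
  have "classical_solution E A D (f 0)
      (\<lambda>t. - (\<Sum>i\<le>p. kernel_inverse p (((E \<circ> kernel_inverse p) ^^ i) (f i t))))"
    using kernel_inverse_right_inverse E_kernel_inverse_funpow_mem_Z_ker[where j=1]
      E_kernel_inverse_nilpotent f_Z_ker f_deriv f_cont
    by (intro classical_solution_nilpotent[where Z="Z_ker p",
          OF cbounded_linear_imp_bounded_linear[OF E] A_linear bounded_linear_kernel_inverse])
      auto
  then show ?thesis
    by (rule classical_solution_cong)
      (use the_inv_into_funpow_E_the_inv_into[OF f_Z_ker] in \<open>auto intro!: sum.cong\<close>)
qed

end
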